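(* Let $2\le k\le n$ and let $w$ be a word of length $k$. Then \[f(w,n,1)\cdot(3n-4k)\;\le\; f(w,n,2)\;\le\; f(w,n,1)\cdot 2n+4\sum_{i=k}^{n} f(w,i,1).\]
   Context: Let $[n]=\{1,\dots,n\}$. For a positive integer $d$, an $(n,d)$-grid is a function $G:[n]^d\to\Sigma$ for an arbitrary set of letters $\Sigma$. A line of length $k$ in $[n]^d$ is a set $\{p,p+v,\dots,p+(k-1)v\}\subseteq[n]^d$ with $p\in[n]^d$ and $v\in\{-1,0,1\}^d\setminus\{\vec 0\}$ (each such set counted once). For a word $w=w_1\cdots w_k$, such a line contains $w$ in $G$ if $G(p)G(p+v)\cdots G(p+(k-1)v)=w$ or this sequence read backwards equals $w$. $f(w,G)$ is the number of lines of length $k$ in $[n]^d$ containing $w$, and $f(w,n,d)=\max_G f(w,G)$ over all $(n,d)$-grids $G$. In particular $f(w,i,1)$ is the maximum number of sets of $k$ consecutive positions in a sequence of length $i$ that read $w$ forwards or backwards. *)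

theory Defs
  imports Main
begin

definition grid_pts :: "nat \<Rightarrow> nat \<Rightarrow> int list set" where
  "grid_pts n d = {p. length p = d \<and> (\<forall>x\<in>set p. 1 \<le> x \<and> x \<le> int n)}"

definition dirs :: "nat \<Rightarrow> int list set" where
  "dirs d = {v. length v = d \<and> set v \<subseteq> {-1,0,1} \<and> (\<exists>x\<in>set v. x \<noteq> 0)}"

definition line_pt :: "int list \<Rightarrow> int list \<Rightarrow> nat \<Rightarrow> int list" where
  "line_pt p v i = map2 (\<lambda>a b. a + int i * b) p v"

definition line_seq :: "int list \<Rightarrow> int list \<Rightarrow> nat \<Rightarrow> int list list" where
  "line_seq p v k = map (line_pt p v) [0..<k]"

text \<open>Lines of length |w| in [n]^d (as sets, each counted once) that contain w in G,
  i.e. read w forwards or backwards.\<close>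
definition lines_containing ::
  "'a list \<Rightarrow> (int list \<Rightarrow> 'a) \<Rightarrow> nat \<Rightarrow> nat \<Rightarrow> int list set set" where
  "lines_containing w G n d =
     {L. \<exists>p v. p \<in> grid_pts n d \<and> v \<in> dirs d \<and>
              set (line_seq p v (length w)) \<subseteq> grid_pts n d \<and>
              L = set (line_seq p v (length w)) \<and>
              (map G (line_seq p v (length w)) = w \<or>
               rev (map G (line_seq p v (length w))) = w)}"

definition fG :: "'a list \<Rightarrow> (int list \<Rightarrow> 'a) \<Rightarrow> nat \<Rightarrow> nat \<Rightarrow> nat" where
  "fG w G n d = card (lines_containing w G n d)"

text \<open>f(w,n,d): maximum over all (n,d)-grids (values of G outside [n]^d are irrelevant).\<close>
definition fmax :: "'a list \<Rightarrow> nat \<Rightarrow> nat \<Rightarrow> nat" where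
  "fmax w n d = Max {fG w G n d | G. True}"

end

theory Submission
  imports Defs
begin

(* Every line of the n x n grid has one of the four directions (1,0), (0,1), (1,1), (1,-1) when
   read from a suitable end.  A row or a column is a one-dimensional grid of size n, so it carries at
   most f(w, n, 1) occurrences; the diagonal y - x = c (and likewise the antidiagonal, after the
   reflection y -> n + 1 - y) is a one-dimensional grid of size n - |c| and carries at most
   f(w, n - |c|, 1).  Only |c| <= n - k can contain a line of length k, and each size i in k..n arises
   for at most two values of c, which gives the upper bound.  For the lower bound, copy an optimal
   one-dimensional grid s into every row, G(x, y) = s(x): each occurrence of w in s yields an
   occurrence in each of the n rows and on n - k + 1 diagonals of either slope, and for k >= 2 these
   lines are pairwise distinct. *)

definition reads :: "'a list \<Rightarrow> 'a list \<Rightarrow> bool" where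
  "reads w xs \<longleftrightarrow> xs = w \<or> rev xs = w"

definition occurrence_starts ::
  "'a list \<Rightarrow> (int list \<Rightarrow> 'a) \<Rightarrow> nat \<Rightarrow> nat \<Rightarrow> int list \<Rightarrow> int list set" where
  "occurrence_starts w G n d v =
     {p. p \<in> grid_pts n d \<and> set (line_seq p v (length w)) \<subseteq> grid_pts n d \<and>
         reads w (map G (line_seq p v (length w)))}"

lemma reads_rev [simp]: "reads w (rev xs) = reads w xs"
  unfolding reads_def by auto

lemma length_grid_pts: "p \<in> grid_pts n d \<Longrightarrow> length p = d"
  unfolding grid_pts_def by simp

lemma length_dirs: "v \<in> dirs d \<Longrightarrow> length v = d"
  unfolding dirs_def by simp

lemma finite_grid_pts: "finite (grid_pts n d)"
proof -
  have "grid_pts n d \<subseteq> {xs. set xs \<subseteq> {1..int n} \<and> length xs = d}"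
    unfolding grid_pts_def by auto
  then show ?thesis
    using finite_lists_length_eq[of "{1..int n}" d] finite_subset by blast
qed

lemma finite_occurrence_starts: "finite (occurrence_starts w G n d v)"
  by (rule finite_subset[OF _ finite_grid_pts[of n d]]) (auto simp: occurrence_starts_def)

lemma line_pt_0: "length p = length v \<Longrightarrow> line_pt p v 0 = p"
  unfolding line_pt_def by (induction p v rule: list_induct2) auto

lemma line_pt_reverse:
  "length p = length v \<Longrightarrow> i \<le> m \<Longrightarrow>
   line_pt (line_pt p v m) (map uminus v) i = line_pt p v (m - i)"
  unfolding line_pt_def by (induction p v rule: list_induct2) (auto simp: of_nat_diff algebra_simps)

lemma line_seq_reverse:
  "length p = length v \<Longrightarrow>
   line_seq (line_pt p v (k - 1)) (map uminus v) k = rev (line_seq p v k)"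
  unfolding line_seq_def by (rule nth_equalityI) (auto simp: rev_nth line_pt_reverse)

lemma line_seq_endpoints:
  assumes "length p = length v" and "k \<ge> 1"
  shows "p \<in> set (line_seq p v k)" and "line_pt p v (k - 1) \<in> set (line_seq p v k)"
  using assms by (auto simp: line_seq_def line_pt_0 intro!: image_eqI[of p _ 0])

lemma occurrence_starts_endpoints:
  assumes "length w \<ge> 1" and "v \<in> dirs d" and "p \<in> occurrence_starts w G n d v"
  shows "p \<in> grid_pts n d" and "line_pt p v (length w - 1) \<in> grid_pts n d"
  using assms line_seq_endpoints[of p v "length w"]
  by (auto simp: occurrence_starts_def length_grid_pts length_dirs)

lemma occurrence_starts_reverse:
  assumes "length w \<ge> 1" and v: "v \<in> dirs d" and p: "p \<in> occurrence_starts w G n d v"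
  defines "q \<equiv> line_pt p v (length w - 1)"
  shows "q \<in> occurrence_starts w G n d (map uminus v)"
    and "set (line_seq q (map uminus v) (length w)) = set (line_seq p v (length w))"
proof -
  have rev_seq: "line_seq q (map uminus v) (length w) = rev (line_seq p v (length w))"
    unfolding q_def using p v
    by (intro line_seq_reverse) (auto simp: occurrence_starts_def length_grid_pts length_dirs)
  then show "set (line_seq q (map uminus v) (length w)) = set (line_seq p v (length w))"
    by simp
  show "q \<in> occurrence_starts w G n d (map uminus v)"
    using p occurrence_starts_endpoints(2)[OF assms(1) v p]
    unfolding occurrence_starts_def mem_Collect_eq rev_seq by (simp add: q_def rev_map[symmetric])
qed

lemma lines_containing_eq_UN:
  "lines_containing w G n d =
     (\<Union>v\<in>dirs d. (\<lambda>p. set (line_seq p v (length w))) ` occurrence_starts w G n d v)"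
  unfolding lines_containing_def occurrence_starts_def reads_def by blast

lemma lines_containing_subset_UN_representatives:
  assumes "length w \<ge> 1" and reps: "\<And>v. v \<in> dirs d \<Longrightarrow> v \<in> D \<or> map uminus v \<in> D"
  shows "lines_containing w G n d \<subseteq>
           (\<Union>v\<in>D. (\<lambda>p. set (line_seq p v (length w))) ` occurrence_starts w G n d v)"
proof
  fix L assume "L \<in> lines_containing w G n d"
  then obtain v p where v: "v \<in> dirs d" and p: "p \<in> occurrence_starts w G n d v"
    and L: "L = set (line_seq p v (length w))"
    unfolding lines_containing_eq_UN by blast
  from reps[OF v] show "L \<in> (\<Union>v\<in>D. (\<lambda>p. set (line_seq p v (length w))) ` occurrence_starts w G n d v)"
  proof
    assume "map uminus v \<in> D"
    then show ?thesis
      using occurrence_starts_reverse[OF assms(1) v p] L by blast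
  qed (use p L in blast)
qed

lemma fG_le_sum_card_occurrence_starts:
  assumes "length w \<ge> 1" and "finite D"
    and "\<And>v. v \<in> dirs d \<Longrightarrow> v \<in> D \<or> map uminus v \<in> D"
  shows "fG w G n d \<le> (\<Sum>v\<in>D. card (occurrence_starts w G n d v))"
proof -
  have "fG w G n d \<le> card (\<Union>v\<in>D. (\<lambda>p. set (line_seq p v (length w))) ` occurrence_starts w G n d v)"
    unfolding fG_def using assms
    by (intro card_mono lines_containing_subset_UN_representatives) (auto simp: finite_occurrence_starts)
  also have "\<dots> \<le> (\<Sum>v\<in>D. card ((\<lambda>p. set (line_seq p v (length w))) ` occurrence_starts w G n d v))"
    by (rule card_UN_le[OF assms(2)])
  also have "\<dots> \<le> (\<Sum>v\<in>D. card (occurrence_starts w G n d v))"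
    by (intro sum_mono card_image_le finite_occurrence_starts)
  finally show ?thesis .
qed

lemma dirs_1: "dirs 1 = {[1], [-1]}"
proof -
  have "length v = 1 \<longleftrightarrow> (\<exists>x. v = [x])" for v :: "int list"
    by (cases v) auto
  then show ?thesis unfolding dirs_def by auto
qed

lemma line_pt_1d: "line_pt [t] [c] i = [t + int i * c]"
  unfolding line_pt_def by simp

lemma grid_pts_1_singleton: "p \<in> grid_pts n 1 \<Longrightarrow> p = [hd p]"
  unfolding grid_pts_def by (cases p) auto

lemma occurrence_starts_1d_iff:
  assumes "length w \<ge> 1"
  shows "[t] \<in> occurrence_starts w H m 1 [1] \<longleftrightarrow>
           1 \<le> t \<and> t + int (length w) - 1 \<le> int m \<and>
           reads w (map H (line_seq [t] [1] (length w)))"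
proof -
  have "set (line_seq [t] [1] (length w)) \<subseteq> grid_pts m 1 \<longleftrightarrow>
          (\<forall>i<length w. 1 \<le> t + int i \<and> t + int i \<le> int m)"
    by (auto simp: line_seq_def line_pt_1d grid_pts_def image_subset_iff)
  also have "\<dots> \<longleftrightarrow> 1 \<le> t \<and> t + int (length w) - 1 \<le> int m"
  proof
    assume "\<forall>i<length w. 1 \<le> t + int i \<and> t + int i \<le> int m"
    moreover have "0 < length w" "length w - 1 < length w"
      using assms by auto
    ultimately have "1 \<le> t + int 0" "t + int (length w - 1) \<le> int m"
      by blast+
    then show "1 \<le> t \<and> t + int (length w) - 1 \<le> int m"
      using assms by (simp add: of_nat_diff)
  qed auto
  finally show ?thesis
    using assms by (auto simp: occurrence_starts_def grid_pts_def)
qed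

lemma line_seq_1d_inj:
  assumes "k \<ge> 1" and "set (line_seq [a] [1] k) = set (line_seq [b] [1] k)"
  shows "a = b"
proof -
  have "[a] \<in> set (line_seq [b] [1] k)" and "[b] \<in> set (line_seq [a] [1] k)"
    using assms line_seq_endpoints(1)[of _ "[1]" k] by auto
  then obtain i j where "a = b + int i" and "b = a + int j"
    by (auto simp: line_seq_def line_pt_1d)
  then show ?thesis by simp
qed

text \<open>In dimension one a line is determined by its leftmost point.\<close>
lemma fG_1d:
  assumes "length w \<ge> 1"
  shows "fG w H n 1 = card (occurrence_starts w H n 1 [1])"
proof -
  let ?line = "\<lambda>p. set (line_seq p [1] (length w))"
  have "lines_containing w H n 1 \<subseteq> (\<Union>v\<in>{[1]}.
           (\<lambda>p. set (line_seq p v (length w))) ` occurrence_starts w H n 1 v)"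
    by (rule lines_containing_subset_UN_representatives[OF assms]) (unfold dirs_1, auto)
  then have "lines_containing w H n 1 \<subseteq> ?line ` occurrence_starts w H n 1 [1]"
    by simp
  moreover have "?line ` occurrence_starts w H n 1 [1] \<subseteq> lines_containing w H n 1"
    unfolding lines_containing_eq_UN dirs_1 by blast
  moreover have "inj_on ?line (occurrence_starts w H n 1 [1])"
  proof (rule inj_onI)
    fix p q
    assume "p \<in> occurrence_starts w H n 1 [1]" "q \<in> occurrence_starts w H n 1 [1]"
      and "?line p = ?line q"
    then show "p = q"
      using line_seq_1d_inj[OF assms] grid_pts_1_singleton unfolding occurrence_starts_def
      by (metis (no_types, lifting) mem_Collect_eq)
  qed
  ultimately show ?thesis
    unfolding fG_def by (metis card_image subset_antisym)
qed

lemma finite_lines_containing: "finite (lines_containing w G n d)"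
  unfolding lines_containing_eq_UN
  by (rule finite_subset[OF _ finite_Pow_iff[THEN iffD2, OF finite_grid_pts]])
    (auto simp: occurrence_starts_def)

lemma finite_fG_values: "finite {fG w G n d | G. True}"
proof -
  have "fG w G n d \<le> card (Pow (grid_pts n d))" for G
    unfolding fG_def lines_containing_eq_UN
    by (rule card_mono) (auto simp: finite_grid_pts occurrence_starts_def)
  then have "{fG w G n d | G. True} \<subseteq> {..card (Pow (grid_pts n d))}"
    by auto
  then show ?thesis
    using finite_subset by blast
qed

lemma fG_le_fmax: "fG w G n d \<le> fmax w n d"
  unfolding fmax_def by (rule Max_ge[OF finite_fG_values]) blast

lemma fmax_attained: obtains G where "fmax w n d = fG w G n d"
proof -
  have "fmax w n d \<in> {fG w G n d | G. True}"
    unfolding fmax_def by (rule Max_in[OF finite_fG_values]) blast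
  then show ?thesis using that by blast
qed

text \<open>\<open>emb i\<close> places a one-dimensional grid of size \<open>len i\<close> along direction \<open>v\<close>.\<close>
lemma card_occurrence_starts_le_sum_fmax:
  fixes emb :: "'i \<Rightarrow> int \<Rightarrow> int list" and len :: "'i \<Rightarrow> nat"
  assumes k: "length w \<ge> 1" and I: "finite I"
    and emb_line: "\<And>i t j. emb i (t + int j) = line_pt (emb i t) v j"
    and cover: "\<And>p. p \<in> occurrence_starts w G n d v \<Longrightarrow>
                  \<exists>i\<in>I. \<exists>t. p = emb i t \<and> 1 \<le> t \<and> t + int (length w) - 1 \<le> int (len i)"
  shows "card (occurrence_starts w G n d v) \<le> (\<Sum>i\<in>I. fmax w (len i) 1)"
proof -
  define H where "H i = (\<lambda>q. G (emb i (hd q)))" for i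
  define S where "S = (SIGMA i:I. occurrence_starts w (H i) (len i) 1 [1])"
  have "occurrence_starts w G n d v \<subseteq> (\<lambda>(i, q). emb i (hd q)) ` S"
  proof
    fix p assume p: "p \<in> occurrence_starts w G n d v"
    then obtain i t where i: "i \<in> I" and pt: "p = emb i t"
      and t: "1 \<le> t" "t + int (length w) - 1 \<le> int (len i)"
      using cover by blast
    have "map (H i) (line_seq [t] [1] (length w)) = map G (line_seq p v (length w))"
      by (simp add: H_def line_seq_def line_pt_1d pt emb_line)
    then have "[t] \<in> occurrence_starts w (H i) (len i) 1 [1]"
      unfolding occurrence_starts_1d_iff[OF k] using p t by (simp add: occurrence_starts_def)
    then show "p \<in> (\<lambda>(i, q). emb i (hd q)) ` S"
      using i pt unfolding S_def by force
  qed
  moreover have "finite S"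
    unfolding S_def using I by (simp add: finite_occurrence_starts)
  ultimately have "card (occurrence_starts w G n d v) \<le> card S"
    by (meson card_image_le card_mono finite_imageI le_trans)
  also have "\<dots> = (\<Sum>i\<in>I. fG w (H i) (len i) 1)"
    unfolding S_def fG_1d[OF k] using I by (simp add: finite_occurrence_starts)
  also have "\<dots> \<le> (\<Sum>i\<in>I. fmax w (len i) 1)"
    by (intro sum_mono fG_le_fmax)
  finally show ?thesis .
qed

lemma line_pt_2d: "line_pt [a, b] [c, d] i = [a + int i * c, b + int i * d]"
  unfolding line_pt_def by simp

lemma grid_pts_2: "[x, y] \<in> grid_pts n 2 \<longleftrightarrow> 1 \<le> x \<and> x \<le> int n \<and> 1 \<le> y \<and> y \<le> int n"
  unfolding grid_pts_def by auto

lemma length_2_cases: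
  assumes "length p = 2" obtains x y where "p = [x, y]"
  using assms by (cases p; cases "tl p") auto

lemma line_seq_2d_subset_grid_pts:
  "set (line_seq [a, b] [c, d] k) \<subseteq> grid_pts n 2 \<longleftrightarrow>
     (\<forall>i<k. 1 \<le> a + int i * c \<and> a + int i * c \<le> int n \<and> 1 \<le> b + int i * d \<and> b + int i * d \<le> int n)"
  by (auto simp: line_seq_def line_pt_2d grid_pts_2 image_subset_iff)

lemma occurrence_starts_2d_endpoints:
  assumes "length w \<ge> 1" and "p \<in> occurrence_starts w G n 2 [c, d]" and "[c, d] \<in> dirs 2"
  obtains a b where "p = [a, b]" and "[a, b] \<in> grid_pts n 2"
    and "[a + (int (length w) - 1) * c, b + (int (length w) - 1) * d] \<in> grid_pts n 2"
proof -
  note ends = occurrence_starts_endpoints[OF assms(1,3,2)]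
  from ends obtain a b where "p = [a, b]"
    using length_2_cases length_grid_pts by metis
  with ends assms(1) show ?thesis
    using that by (simp add: line_pt_2d of_nat_diff)
qed

lemma dirs_2_representatives:
  assumes "v \<in> dirs 2"
  shows "v \<in> {[1, 0], [0, 1], [1, 1], [1, -1]} \<or> map uminus v \<in> {[1, 0], [0, 1], [1, 1], [1, -1]}"
proof -
  obtain c d where "v = [c, d]"
    using assms length_2_cases length_dirs by metis
  with assms show ?thesis
    unfolding dirs_def by auto
qed

lemma card_occurrence_starts_horizontal:
  assumes "length w \<ge> 1"
  shows "card (occurrence_starts w G n 2 [1, 0]) \<le> n * fmax w n 1"
proof -
  have "card (occurrence_starts w G n 2 [1, 0]) \<le> (\<Sum>b\<in>{1..int n}. fmax w n 1)"
  proof (rule card_occurrence_starts_le_sum_fmax[where emb = "\<lambda>b t. [t, b]" and len = "\<lambda>_. n"])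
    fix p assume "p \<in> occurrence_starts w G n 2 [1, 0]"
    then obtain a b where "p = [a, b]" "[a, b] \<in> grid_pts n 2"
      "[a + (int (length w) - 1), b] \<in> grid_pts n 2"
      by (rule occurrence_starts_2d_endpoints[OF assms]) (auto simp: dirs_def)
    then show "\<exists>b\<in>{1..int n}. \<exists>t. p = [t, b] \<and> 1 \<le> t \<and> t + int (length w) - 1 \<le> int n"
      by (auto simp: grid_pts_2)
  qed (use assms in \<open>simp_all add: line_pt_2d\<close>)
  then show ?thesis by simp
qed

lemma card_occurrence_starts_vertical:
  assumes "length w \<ge> 1"
  shows "card (occurrence_starts w G n 2 [0, 1]) \<le> n * fmax w n 1"
proof -
  have "card (occurrence_starts w G n 2 [0, 1]) \<le> (\<Sum>a\<in>{1..int n}. fmax w n 1)"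
  proof (rule card_occurrence_starts_le_sum_fmax[where emb = "\<lambda>a t. [a, t]" and len = "\<lambda>_. n"])
    fix p assume "p \<in> occurrence_starts w G n 2 [0, 1]"
    then obtain a b where "p = [a, b]" "[a, b] \<in> grid_pts n 2"
      "[a, b + (int (length w) - 1)] \<in> grid_pts n 2"
      by (rule occurrence_starts_2d_endpoints[OF assms]) (auto simp: dirs_def)
    then show "\<exists>a\<in>{1..int n}. \<exists>t. p = [a, t] \<and> 1 \<le> t \<and> t + int (length w) - 1 \<le> int n"
      by (auto simp: grid_pts_2)
  qed (use assms in \<open>simp_all add: line_pt_2d\<close>)
  then show ?thesis by simp
qed

text \<open>The diagonal \<open>y - x = c\<close> of the grid is a one-dimensional grid of size \<open>n - \<bar>c\<bar>\<close>.\<close>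
lemma card_occurrence_starts_diagonal:
  assumes "length w \<ge> 1"
  shows "card (occurrence_starts w G n 2 [1, 1]) \<le>
           (\<Sum>c\<in>{-(int n - int (length w))..int n - int (length w)}. fmax w (nat (int n - \<bar>c\<bar>)) 1)"
proof (rule card_occurrence_starts_le_sum_fmax
    [where emb = "\<lambda>c t. [t + max 0 (- c), t + max 0 c]" and len = "\<lambda>c. nat (int n - \<bar>c\<bar>)"])
  fix p assume "p \<in> occurrence_starts w G n 2 [1, 1]"
  then obtain a b where p: "p = [a, b]" and ends: "[a, b] \<in> grid_pts n 2"
    "[a + (int (length w) - 1), b + (int (length w) - 1)] \<in> grid_pts n 2"
    by (rule occurrence_starts_2d_endpoints[OF assms]) (auto simp: dirs_def)
  show "\<exists>c\<in>{-(int n - int (length w))..int n - int (length w)}. \<exists>t.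
          p = [t + max 0 (- c), t + max 0 c] \<and> 1 \<le> t \<and> t + int (length w) - 1 \<le> int (nat (int n - \<bar>c\<bar>))"
  proof (intro bexI exI conjI)
    show "p = [min a b + max 0 (- (b - a)), min a b + max 0 (b - a)]"
      unfolding p by auto
  qed (use ends in \<open>auto simp: grid_pts_2\<close>)
qed (use assms in \<open>simp_all add: line_pt_2d\<close>)

text \<open>Reflecting \<open>y \<mapsto> n + 1 - y\<close> turns antidiagonals into diagonals.\<close>
lemma card_occurrence_starts_antidiagonal:
  assumes "length w \<ge> 1"
  shows "card (occurrence_starts w G n 2 [1, -1]) \<le>
           (\<Sum>c\<in>{-(int n - int (length w))..int n - int (length w)}. fmax w (nat (int n - \<bar>c\<bar>)) 1)"
proof (rule card_occurrence_starts_le_sum_fmax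
    [where emb = "\<lambda>c t. [t + max 0 (- c), int n + 1 - (t + max 0 c)]"
      and len = "\<lambda>c. nat (int n - \<bar>c\<bar>)"])
  fix p assume "p \<in> occurrence_starts w G n 2 [1, -1]"
  then obtain a b where p: "p = [a, b]" and ends: "[a, b] \<in> grid_pts n 2"
    "[a + (int (length w) - 1), b - (int (length w) - 1)] \<in> grid_pts n 2"
    by (rule occurrence_starts_2d_endpoints[OF assms]) (auto simp: dirs_def algebra_simps)
  define b' where "b' = int n + 1 - b"
  show "\<exists>c\<in>{-(int n - int (length w))..int n - int (length w)}. \<exists>t.
          p = [t + max 0 (- c), int n + 1 - (t + max 0 c)] \<and> 1 \<le> t \<and>
          t + int (length w) - 1 \<le> int (nat (int n - \<bar>c\<bar>))"
  proof (intro bexI exI conjI)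
    show "p = [min a b' + max 0 (- (b' - a)), int n + 1 - (min a b' + max 0 (b' - a))]"
      unfolding p b'_def by auto
  qed (use ends in \<open>auto simp: grid_pts_2 b'_def\<close>)
qed (use assms in \<open>simp_all add: line_pt_2d\<close>)

lemma sum_symmetric_range_le:
  fixes F :: "nat \<Rightarrow> nat"
  assumes "k \<le> n"
  shows "(\<Sum>c\<in>{-(int n - int k)..int n - int k}. F (nat (int n - \<bar>c\<bar>))) \<le> 2 * (\<Sum>i=k..n. F i)"
proof -
  have "(\<Sum>c\<in>{-(int n - int k)..int n - int k}. F (nat (int n - \<bar>c\<bar>))) =
        (\<Sum>c\<in>{-(int n - int k)..0}. F (nat (int n - \<bar>c\<bar>))) + (\<Sum>c\<in>{1..int n - int k}. F (nat (int n - \<bar>c\<bar>)))"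
    using assms by (subst sum.union_disjoint[symmetric]) (auto intro!: sum.cong)
  also have "(\<Sum>c\<in>{-(int n - int k)..0}. F (nat (int n - \<bar>c\<bar>))) = (\<Sum>i=k..n. F i)"
    by (rule sum.reindex_bij_witness[of _ "\<lambda>i. int i - int n" "\<lambda>c. nat (int n + c)"]) (use assms in auto)
  also have "(\<Sum>c\<in>{1..int n - int k}. F (nat (int n - \<bar>c\<bar>))) = (\<Sum>i=k..<n. F i)"
    by (rule sum.reindex_bij_witness[of _ "\<lambda>i. int n - int i" "\<lambda>c. nat (int n - c)"]) (use assms in auto)
  also have "(\<Sum>i=k..<n. F i) \<le> (\<Sum>i=k..n. F i)"
    by (rule sum_mono2) auto
  finally show ?thesis by simp
qed

lemma fmax_2d_le:
  assumes "length w = k" and "1 \<le> k" and "k \<le> n"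
  shows "fmax w n 2 \<le> 2 * n * fmax w n 1 + 4 * (\<Sum>i=k..n. fmax w i 1)"
proof -
  obtain G where G: "fmax w n 2 = fG w G n 2"
    by (rule fmax_attained)
  let ?occ = "occurrence_starts w G n 2"
  let ?S = "\<Sum>i=k..n. fmax w i 1"
  have k1: "length w \<ge> 1" using assms by simp
  have diagonals: "(\<Sum>c\<in>{-(int n - int k)..int n - int k}. fmax w (nat (int n - \<bar>c\<bar>)) 1) \<le> 2 * ?S"
    by (rule sum_symmetric_range_le[OF assms(3)])
  have "fG w G n 2 \<le> (\<Sum>v\<in>{[1, 0], [0, 1], [1, 1], [1, -1]}. card (?occ v))"
    by (rule fG_le_sum_card_occurrence_starts[OF k1]) (auto dest: dirs_2_representatives)
  also have "\<dots> = card (?occ [1, 0]) + card (?occ [0, 1]) + card (?occ [1, 1]) + card (?occ [1, -1])"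
    by simp
  also have "\<dots> \<le> n * fmax w n 1 + n * fmax w n 1 + 2 * ?S + 2 * ?S"
    using card_occurrence_starts_horizontal[OF k1, of G n] card_occurrence_starts_vertical[OF k1, of G n]
      card_occurrence_starts_diagonal[OF k1, of G n] card_occurrence_starts_antidiagonal[OF k1, of G n]
      diagonals
    unfolding assms(1) by linarith
  finally show ?thesis
    using G by simp
qed

lemma line_seq_2d_slope_inj:
  assumes "k \<ge> 2" and same: "set (line_seq [a, b] [1, d] k) = set (line_seq [a', b'] [1, d'] k)"
  shows "a = a' \<and> b = b' \<and> d = d'"
proof -
  have "[a, b] \<in> set (line_seq [a', b'] [1, d'] k)" and "[a', b'] \<in> set (line_seq [a, b] [1, d] k)"
    using assms line_seq_endpoints(1)[of _ "[1, _]" k] by auto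
  then obtain i j where "a = a' + int i" "b = b' + int i * d'" and "a' = a + int j"
    by (auto simp: line_seq_def line_pt_2d)
  then have start: "a = a'" "b = b'" by auto
  have "[a + 1, b + d] \<in> set (line_seq [a, b] [1, d] k)"
    using assms(1) by (auto simp: line_seq_def line_pt_2d intro!: image_eqI[of _ _ 1])
  then obtain m where "a + 1 = a' + int m" "b + d = b' + int m * d'"
    unfolding same by (auto simp: line_seq_def line_pt_2d)
  with start show ?thesis by auto
qed

lemma occurrence_starts_lift:
  assumes k: "length w \<ge> 1" and a: "[a] \<in> occurrence_starts w s n 1 [1]"
    and b: "\<forall>i<length w. 1 \<le> b + int i * d \<and> b + int i * d \<le> int n"
  shows "[a, b] \<in> occurrence_starts w (\<lambda>q. s [hd q]) n 2 [1, d]"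
proof -
  from a have a_bounds: "1 \<le> a" "a + int (length w) - 1 \<le> int n"
    and reads: "reads w (map s (line_seq [a] [1] (length w)))"
    unfolding occurrence_starts_1d_iff[OF k] by auto
  have "map (\<lambda>q. s [hd q]) (line_seq [a, b] [1, d] (length w)) = map s (line_seq [a] [1] (length w))"
    by (simp add: line_seq_def line_pt_2d line_pt_1d)
  moreover have "set (line_seq [a, b] [1, d] (length w)) \<subseteq> grid_pts n 2"
    unfolding line_seq_2d_subset_grid_pts using a_bounds b by auto
  moreover have "[a, b] \<in> grid_pts n 2"
    using a_bounds b k by (force simp: grid_pts_2)
  ultimately show ?thesis
    using reads by (simp add: occurrence_starts_def)
qed

lemma fmax_2d_ge:
  assumes k: "length w = k" and "2 \<le> k" and "k \<le> n"
  shows "fmax w n 1 * (n + 2 * (n - k + 1)) \<le> fmax w n 2"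
proof -
  obtain s where s: "fmax w n 1 = fG w s n 1"
    by (rule fmax_attained)
  define S where "S = occurrence_starts w s n 1 [1]"
  define rows :: "int \<Rightarrow> int set" where
    "rows d = (if d = 0 then {1..int n} else if d = 1 then {1..int n - int k + 1} else {int k..int n})" for d
  define D where "D = (SIGMA d:{0, 1, -1}. rows d \<times> S)"
  define line where "line = (\<lambda>(d, b, q). set (line_seq [hd q, b] [1, d] k))"
  have k1: "length w \<ge> 1" using assms by simp
  have S_singletons: "q = [hd q]" if "q \<in> S" for q
    using that grid_pts_1_singleton unfolding S_def occurrence_starts_def by blast
  have "line ` D \<subseteq> lines_containing w (\<lambda>q. s [hd q]) n 2"
  proof
    fix L assume "L \<in> line ` D"
    then obtain d b q where d: "d \<in> {0, 1, -1}" and b: "b \<in> rows d" and q: "q \<in> S"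
      and L: "L = set (line_seq [hd q, b] [1, d] k)"
      unfolding D_def line_def by auto
    have "\<forall>i<k. 1 \<le> b + int i * d \<and> b + int i * d \<le> int n"
      using d b assms by (auto simp: rows_def)
    then have "[hd q, b] \<in> occurrence_starts w (\<lambda>q. s [hd q]) n 2 [1, d]"
      using occurrence_starts_lift[OF k1] q S_singletons unfolding S_def k by metis
    moreover have "[1, d] \<in> dirs 2"
      using d by (auto simp: dirs_def)
    ultimately show "L \<in> lines_containing w (\<lambda>q. s [hd q]) n 2"
      unfolding lines_containing_eq_UN L k by blast
  qed
  moreover have "inj_on line D"
  proof (rule inj_onI)
    fix x y assume x: "x \<in> D" and y: "y \<in> D" and same_line: "line x = line y"
    obtain d b q d' b' q' where xy: "x = (d, b, q)" "y = (d', b', q')"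
      by (cases x, cases y) auto
    have "q \<in> S" "q' \<in> S"
      using x y unfolding xy D_def by auto
    with same_line show "x = y"
      using line_seq_2d_slope_inj[OF assms(2), of "hd q" b d "hd q'" b' d'] S_singletons
      unfolding xy line_def by (metis case_prod_conv)
  qed
  moreover have "card D = card S * (n + 2 * (n - k + 1))"
  proof -
    have "card (rows 0) = n" "card (rows 1) = n - k + 1" "card (rows (-1)) = n - k + 1"
      using assms by (simp_all add: rows_def)
    moreover have "finite (rows d)" for d
      by (simp add: rows_def)
    ultimately show ?thesis
      unfolding D_def S_def by (simp add: card_cartesian_product finite_occurrence_starts algebra_simps)
  qed
  ultimately have "card S * (n + 2 * (n - k + 1)) \<le> fG w (\<lambda>q. s [hd q]) n 2"
    unfolding fG_def by (metis card_image card_mono finite_lines_containing)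
  then show ?thesis
    using s fG_1d[OF k1] fG_le_fmax unfolding S_def by (metis le_trans)
qed

theorem theorem23:
  fixes w :: "'a list" and n k :: nat
  assumes "2 \<le> k" and "k \<le> n" and "length w = k"
  shows "int (fmax w n 1) * (3 * int n - 4 * int k) \<le> int (fmax w n 2) \<and>
         int (fmax w n 2) \<le> int (fmax w n 1) * (2 * int n) + 4 * (\<Sum>i=k..n. int (fmax w i 1))"
proof
  have "int (fmax w n 1) * (3 * int n - 4 * int k) \<le> int (fmax w n 1) * int (n + 2 * (n - k + 1))"
    using assms by (intro mult_left_mono) auto
  also have "\<dots> \<le> int (fmax w n 2)"
    using fmax_2d_ge[OF assms(3,1,2)] by (metis of_nat_le_iff of_nat_mult)
  finally show "int (fmax w n 1) * (3 * int n - 4 * int k) \<le> int (fmax w n 2)" .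
next
  have "fmax w n 2 \<le> 2 * n * fmax w n 1 + 4 * (\<Sum>i=k..n. fmax w i 1)"
    using assms by (intro fmax_2d_le) auto
  then have "int (fmax w n 2) \<le> int (2 * n * fmax w n 1 + 4 * (\<Sum>i=k..n. fmax w i 1))"
    by (simp only: of_nat_le_iff)
  also have "\<dots> = int (fmax w n 1) * (2 * int n) + 4 * (\<Sum>i=k..n. int (fmax w i 1))"
    by (simp add: of_nat_sum)
  finally show "int (fmax w n 2) \<le> int (fmax w n 1) * (2 * int n) + 4 * (\<Sum>i=k..n. int (fmax w i 1))" .
qed

end
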